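(* For every sum-bucket game $\mathcal R$, every sequence of greedy moves starting from an arbitrary routing is finite and ends at a Nash-routing; in particular every sum-bucket game has a Nash-routing.
   Context: A routing game $(\mathbf N,G,\mathcal P)$: players $\{1,\dots,N\}$ ($N\ge1$), a finite graph $G$, and for each player $i$ a nonempty finite set $\mathcal P_i$ of paths (each with at least one edge) from $u_i$ to $v_i$; $\mathcal P=\bigcup_i\mathcal P_i$, $L=\max_{p\in\mathcal P}|p|$. A routing is $\mathbf p=[p_1,\dots,p_N]$ with $p_i\in\mathcal P_i$. Sum-bucket game: for $k=0,\dots,\lceil\lg L\rceil$ the bucket $B_k$ is the set of paths in $\mathcal P$ with length in $[2^k,2^{k+1})$, $B(q)$ is the bucket index of path $q$; normalized length $\overline D_q=2^{B(q)+1}-1$; $\overline C_{e,q}(\mathbf p)$ is the number of players $j$ with $e\in p_j$ and $B(p_j)=B(q)$; $\overline C_q(\mathbf p)=\max_{e\in q}\overline C_{e,q}(\mathbf p)$; player cost $pc_i(\mathbf p)=\overline C_{p_i}(\mathbf p)+\overline D_{p_i}$. A greedy move by player $i$ replaces $p_i$ by some $p_i'\in\mathcal P_i$ so that $pc_i$ strictly decreases, other paths unchanged. A Nash-routing is a routing from which no greedy move is possible. *)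

theory Defs
  imports Main
begin

fun walk :: "('e \<Rightarrow> 'v \<times> 'v) \<Rightarrow> 'v \<Rightarrow> 'e list \<Rightarrow> 'v \<Rightarrow> bool" where
  "walk ends u [] v = (u = v)"
| "walk ends u (e # es) v =
     (\<exists>w. (ends e = (u, w) \<or> ends e = (w, u)) \<and> walk ends w es v)"

definition is_path :: "'v set \<Rightarrow> 'e set \<Rightarrow> ('e \<Rightarrow> 'v \<times> 'v) \<Rightarrow> 'v \<Rightarrow> 'v \<Rightarrow> 'e list \<Rightarrow> bool" where
  "is_path V E ends u v p \<longleftrightarrow> p \<noteq> [] \<and> set p \<subseteq> E \<and> u \<in> V \<and> v \<in> V
     \<and> (\<forall>e\<in>E. fst (ends e) \<in> V \<and> snd (ends e) \<in> V) \<and> walk ends u p v"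

definition bucket :: "'e list \<Rightarrow> nat" where
  "bucket q = (THE k. 2 ^ k \<le> length q \<and> length q < 2 ^ (k + 1))"

definition norm_len :: "'e list \<Rightarrow> nat" where
  "norm_len q = 2 ^ (bucket q + 1) - 1"

text \<open>Routings: functions from players {1..N} to paths (values outside {1..N} are irrelevant).\<close>
definition is_routing :: "nat \<Rightarrow> (nat \<Rightarrow> 'e list set) \<Rightarrow> (nat \<Rightarrow> 'e list) \<Rightarrow> bool" where
  "is_routing N P r \<longleftrightarrow> (\<forall>i\<in>{1..N}. r i \<in> P i)"

definition edge_cong :: "nat \<Rightarrow> (nat \<Rightarrow> 'e list) \<Rightarrow> 'e \<Rightarrow> 'e list \<Rightarrow> nat" where
  "edge_cong N r e q = card {j \<in> {1..N}. e \<in> set (r j) \<and> bucket (r j) = bucket q}"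

definition path_cong :: "nat \<Rightarrow> (nat \<Rightarrow> 'e list) \<Rightarrow> 'e list \<Rightarrow> nat" where
  "path_cong N r q = Max ((\<lambda>e. edge_cong N r e q) ` set q)"

definition player_cost :: "nat \<Rightarrow> (nat \<Rightarrow> 'e list) \<Rightarrow> nat \<Rightarrow> nat" where
  "player_cost N r i = path_cong N r (r i) + norm_len (r i)"

definition greedy_move :: "nat \<Rightarrow> (nat \<Rightarrow> 'e list set) \<Rightarrow> (nat \<Rightarrow> 'e list) \<Rightarrow> (nat \<Rightarrow> 'e list) \<Rightarrow> bool" where
  "greedy_move N P r r' \<longleftrightarrow>
     (\<exists>i\<in>{1..N}. \<exists>p\<in>P i. r' = r(i := p) \<and> player_cost N r' i < player_cost N r i)"

definition nash_routing :: "nat \<Rightarrow> (nat \<Rightarrow> 'e list set) \<Rightarrow> (nat \<Rightarrow> 'e list) \<Rightarrow> bool" where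
  "nash_routing N P r \<longleftrightarrow> is_routing N P r \<and> \<not> (\<exists>r'. greedy_move N P r r')"

end

theory Submission
  imports Defs "HOL-Library.Multiset"
begin

(* Let player i make a greedy move from p_i to p.
   Only congestions counted in the bucket of p can grow, and only on edges of p; hence
   every other player j either does not get worse, or the edge realising j's new
   congestion lies on p in j's bucket, so that j's new cost is at most i's new cost,
   which is below i's old cost.  Consequently the multiset of all player costs strictly
   decreases in the multiset extension of < on nat, which is well-founded. *)

lemma image_mset_decreases:
  fixes f g :: "'a \<Rightarrow> 'b::linorder"
  assumes fin: "finite A" and i: "i \<in> A" and dec: "g i < f i"
    and others: "\<forall>j\<in>A. g j \<le> f j \<or> g j < f i"
  shows "(image_mset g (mset_set A), image_mset f (mset_set A)) \<in> mult {(x, y). x < y}"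
proof -
  define T where "T = {j \<in> A. g j \<noteq> f j}"
  define S where "S = A - T"
  have finT: "finite T" and iT: "i \<in> T" using fin i dec by (auto simp: T_def)
  have split: "mset_set A = mset_set S + mset_set T"
  proof -
    have "A = S \<union> T" and "S \<inter> T = {}" by (auto simp: S_def T_def)
    then show ?thesis using fin by (simp add: mset_set_Union)
  qed
  have same_on_S: "image_mset g (mset_set S) = image_mset f (mset_set S)"
    by (rule image_mset_cong) (auto simp: S_def T_def fin)
  have "(image_mset f (mset_set S) + image_mset g (mset_set T),
         image_mset f (mset_set S) + image_mset f (mset_set T)) \<in> mult {(x, y). x < y}"
  proof (rule one_step_implies_mult)
    show "image_mset f (mset_set T) \<noteq> {#}" using finT iT by (auto simp: mset_set_empty_iff)
    show "\<forall>k\<in>#image_mset g (mset_set T). \<exists>j\<in>#image_mset f (mset_set T). (k, j) \<in> {(x, y). x < y}"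
    proof
      fix k assume "k \<in># image_mset g (mset_set T)"
      then obtain t where t: "t \<in> T" and k: "k = g t" using finT by auto
      from t others have "g t < f t \<or> g t < f i" by (auto simp: T_def)
      then show "\<exists>j\<in>#image_mset f (mset_set T). (k, j) \<in> {(x, y). x < y}"
        using t iT finT k by auto
    qed
  qed
  then show ?thesis by (simp only: split image_mset_union same_on_S)
qed

lemma path_cong_attained:
  assumes "q \<noteq> []"
  obtains e where "e \<in> set q" and "path_cong N r q = edge_cong N r e q"
proof -
  have "path_cong N r q \<in> (\<lambda>e. edge_cong N r e q) ` set q"
    unfolding path_cong_def using assms by (intro Max_in) auto
  then show ?thesis using that by blast
qed

lemma edge_cong_le_path_cong: "e \<in> set q \<Longrightarrow> edge_cong N r e q \<le> path_cong N r q"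
  unfolding path_cong_def by (intro Max_ge) auto

lemma edge_cong_same_bucket: "bucket p = bucket q \<Longrightarrow> edge_cong N r e q = edge_cong N r e p"
  by (simp add: edge_cong_def)

lemma edge_cong_update_le:
  assumes "e \<notin> set p \<or> bucket p \<noteq> bucket q"
  shows "edge_cong N (r(i := p)) e q \<le> edge_cong N r e q"
  unfolding edge_cong_def
  by (rule card_mono) (use assms in auto)

lemma greedy_move_other_player:
  assumes r': "r' = r(i := p)" and dec: "player_cost N r' i < player_cost N r i"
    and j: "j \<noteq> i"
  shows "player_cost N r' j \<le> player_cost N r j \<or> player_cost N r' j < player_cost N r i"
proof (cases "r j = []")
  case True
  then show ?thesis using j r' by (simp add: player_cost_def path_cong_def)
next
  case False
  have qj: "r' j = r j" and pi: "r' i = p" using r' j by auto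
  obtain e where e: "e \<in> set (r j)" and em: "path_cong N r' (r j) = edge_cong N r' e (r j)"
    using path_cong_attained[OF False] .
  show ?thesis
  proof (cases "e \<in> set p \<and> bucket p = bucket (r j)")
    case True
    then have "edge_cong N r' e (r j) \<le> path_cong N r' p"
      using edge_cong_same_bucket edge_cong_le_path_cong by metis
    moreover have "norm_len (r j) = norm_len p" using True by (simp add: norm_len_def)
    ultimately have "player_cost N r' j \<le> player_cost N r' i"
      using em by (simp add: player_cost_def qj pi)
    then show ?thesis using dec by simp
  next
    case False
    then have "edge_cong N r' e (r j) \<le> edge_cong N r e (r j)"
      unfolding r' by (intro edge_cong_update_le) auto
    also have "\<dots> \<le> path_cong N r (r j)" using e by (rule edge_cong_le_path_cong)
    finally show ?thesis using em by (simp add: player_cost_def qj)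
  qed
qed

definition potential :: "nat \<Rightarrow> (nat \<Rightarrow> 'e list) \<Rightarrow> nat multiset" where
  "potential N r = image_mset (player_cost N r) (mset_set {1..N})"

lemma greedy_move_decreases_potential:
  assumes "greedy_move N P r r'"
  shows "(potential N r', potential N r) \<in> mult {(x, y). x < y}"
proof -
  obtain i p where i: "i \<in> {1..N}" and r': "r' = r(i := p)"
    and dec: "player_cost N r' i < player_cost N r i"
    using assms unfolding greedy_move_def by blast
  have "\<forall>j\<in>{1..N}. player_cost N r' j \<le> player_cost N r j \<or> player_cost N r' j < player_cost N r i"
    using greedy_move_other_player[OF r' dec] dec by (metis less_imp_le)
  then show ?thesis
    unfolding potential_def using i dec by (intro image_mset_decreases) auto
qed

lemma wf_greedy_move: "wfP (\<lambda>r' r. greedy_move N P r r')"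
proof -
  have "{(r', r). greedy_move N P r r'} \<subseteq> inv_image (mult {(x, y::nat). x < y}) (potential N)"
    using greedy_move_decreases_potential by auto
  moreover have "wf (inv_image (mult {(x, y::nat). x < y}) (potential N))"
    by (intro wf_inv_image wf_mult wf_less)
  ultimately show ?thesis unfolding wfp_def by (rule wf_subset[rotated])
qed

lemma greedy_move_routing: "greedy_move N P r r' \<Longrightarrow> is_routing N P r \<Longrightarrow> is_routing N P r'"
  unfolding greedy_move_def is_routing_def by auto

lemma reaches_normal_form:
  assumes wf: "wfP (\<lambda>y x. R x y)" and inv: "\<And>x y. R x y \<Longrightarrow> Q x \<Longrightarrow> Q y" and "Q x"
  shows "\<exists>y. R\<^sup>*\<^sup>* x y \<and> Q y \<and> \<not> (\<exists>z. R y z)"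
  using wf \<open>Q x\<close>
proof (induction x rule: wfp_induct_rule)
  case (less x)
  show ?case
  proof (cases "\<exists>z. R x z")
    case True
    then obtain z where step: "R x z" by blast
    with less.IH[of z] inv[OF step less.prems] obtain y
      where "R\<^sup>*\<^sup>* z y" "Q y" "\<not> (\<exists>w. R y w)" by blast
    then show ?thesis using step by (meson converse_rtranclp_into_rtranclp)
  qed (use less.prems in auto)
qed

theorem mainTheorem10:
  fixes N :: nat and V :: "'v set" and E :: "'e set" and ends :: "'e \<Rightarrow> 'v \<times> 'v"
    and u v :: "nat \<Rightarrow> 'v" and P :: "nat \<Rightarrow> 'e list set"
  assumes "N \<ge> 1" and "finite V" and "finite E"
    and "\<forall>i\<in>{1..N}. finite (P i) \<and> P i \<noteq> {} \<and> (\<forall>p\<in>P i. is_path V E ends (u i) (v i) p)"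
  shows "(\<nexists>f. is_routing N P (f 0) \<and> (\<forall>n. greedy_move N P (f n) (f (Suc n))))
     \<and> (\<forall>r. is_routing N P r \<longrightarrow>
           (\<exists>r'. (greedy_move N P)\<^sup>*\<^sup>* r r' \<and> nash_routing N P r'))
     \<and> (\<exists>r. nash_routing N P r)"
proof -
  have finite_sequences: "\<nexists>f. is_routing N P (f 0) \<and> (\<forall>n. greedy_move N P (f n) (f (Suc n)))"
    using wf_greedy_move[of N P] unfolding wfp_def wf_iff_no_infinite_down_chain by auto
  have reach_nash: "\<forall>r. is_routing N P r \<longrightarrow> (\<exists>r'. (greedy_move N P)\<^sup>*\<^sup>* r r' \<and> nash_routing N P r')"
    using reaches_normal_form[of "greedy_move N P" "is_routing N P"]
      wf_greedy_move greedy_move_routing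
    unfolding nash_routing_def by blast
  have "is_routing N P (\<lambda>i. SOME p. p \<in> P i)"
    using assms(4) unfolding is_routing_def by (metis ex_in_conv someI_ex)
  then have "\<exists>r. nash_routing N P r" using reach_nash by blast
  with finite_sequences reach_nash show ?thesis by blast
qed

end
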